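(* Let $F:\mathbb{C}^2\dashrightarrow\mathbb{P}^2$, $F(w_1,w_2)=[w_1^3 : -(1+w_2)^2(1-w_2) : i(1+w_2)(1-w_2)^2]$, with indeterminacy set $I_F=\{(0,1),(0,-1)\}$, and let $\mathbb{S}^3=\{(w_1,w_2)\in\mathbb{C}^2:|w_1|^2+|w_2|^2=1\}$. Then the set $K=\overline{F(\mathbb{S}^3\setminus I_F)}\subset\mathbb{P}^2$ (the proper image of $\mathbb{S}^3$ under $F$) contains no germ of a non-constant complex curve.
   Context: $I_F$ denotes the set of points near which $F$ is not holomorphic. *)

theory Defs
  imports "HOL-Analysis.Analysis"
begin

text \<open>The complex projective plane P^2 is handled through homogeneous coordinates:
  a point of P^2 is the class of a nonzero vector of complex^3 under scaling by
  nonzero complex numbers.\<close>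

definition proj_eq :: "complex^3 \<Rightarrow> complex^3 \<Rightarrow> bool" where
  "proj_eq u v \<longleftrightarrow> (\<exists>c. c \<noteq> 0 \<and> v = c *s u)"

definition Fhom :: "complex \<times> complex \<Rightarrow> complex^3" where
  "Fhom w = (case w of (w1, w2) \<Rightarrow>
     vector [w1 ^ 3, - ((1 + w2)^2 * (1 - w2)), \<i> * (1 + w2) * (1 - w2)^2])"

definition IF :: "(complex \<times> complex) set" where
  "IF = {(0, 1), (0, -1)}"

definition S3 :: "(complex \<times> complex) set" where
  "S3 = {(w1, w2). cmod w1 ^ 2 + cmod w2 ^ 2 = 1}"

definition image_cone :: "(complex^3) set" where
  "image_cone = {c *s Fhom w | c w. c \<noteq> 0 \<and> w \<in> S3 - IF}"

text \<open>Homogeneous representatives of K = closure of F(S3 - IF) in P^2.  Since the quotient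
  map C^3-{0} -> P^2 is open, the preimage of the closure is the closure (in C^3-{0}) of the
  preimage.\<close>
definition K_cone :: "(complex^3) set" where
  "K_cone = closure image_cone - {0}"

text \<open>A non-constant holomorphic disc in P^2, given by a holomorphic lift to C^3-{0}.\<close>
definition nonconst_holo_disc_P2 :: "(complex \<Rightarrow> complex^3) \<Rightarrow> bool" where
  "nonconst_holo_disc_P2 \<gamma> \<longleftrightarrow>
     (\<forall>i. (\<lambda>z. \<gamma> z $ i) holomorphic_on ball 0 1) \<and>
     (\<forall>z\<in>ball 0 1. \<gamma> z \<noteq> 0) \<and>
     (\<exists>z1\<in>ball 0 1. \<exists>z2\<in>ball 0 1. \<not> proj_eq (\<gamma> z1) (\<gamma> z2))"

end

theory Submission
  imports Defs "HOL-Complex_Analysis.Conformal_Mappings"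
begin

(* On the sphere, Re ((1 + w2) * cnj (1 - w2)) = 1 - |w2|^2 = |w1|^2; hence every point v of
   F(S3 - IF) satisfies |v1 v2 v3|^2 = (Im (v2 * cnj v3))^3 and |v1|^2 <= |v2| |v3|. These relations
   are closed and homogeneous, so they hold on K.
   In the affine chart v3 <> 0 a holomorphic disc in K is given by u = v1/v3, t = v2/v3 with
   |u t|^2 = (Im t)^3 and |u|^2 <= |t|, so Im t >= 0. If Im t vanishes at z0, then Im t has a minimum
   there and t is constant by the open mapping theorem. Otherwise u t has a local holomorphic cube
   root g with |g|^2 = Im t, and Im (t - 2 i cnj (g z0) g) = |g - g z0|^2 - |g z0|^2 is minimal at z0,
   which forces g and hence t to be constant. Then |u| is constant, so u is constant by the maximum
   modulus principle. On the line v3 = 0 the relations force v2 <> 0, and the same argument works in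
   that chart. So the disc is locally constant in P^2, hence constant because the disc is connected. *)

lemma Im_minimum_imp_constant_on:
  fixes f :: "complex \<Rightarrow> complex"
  assumes hol: "f holomorphic_on S" and S: "open S" "connected S" and z0: "z0 \<in> S"
    and min: "\<And>z. z \<in> S \<Longrightarrow> Im (f z0) \<le> Im (f z)"
  shows "f constant_on S"
proof (rule ccontr)
  assume "\<not> f constant_on S"
  then have "open (f ` S)"
    using open_mapping_thm[OF hol S S(1) order_refl] by blast
  then obtain e where e: "e > 0" "ball (f z0) e \<subseteq> f ` S"
    using z0 by (meson imageI openE)
  then have "f z0 - \<i> * of_real (e / 2) \<in> f ` S"
    by (auto simp: dist_norm norm_mult)
  then obtain z where "z \<in> S" "f z = f z0 - \<i> * of_real (e / 2)"
    by auto
  with min[of z] e(1) show False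
    by simp
qed

lemma contractible_imp_holomorphic_root:
  assumes hol: "f holomorphic_on S" and S: "contractible S"
    and nz: "\<And>z. z \<in> S \<Longrightarrow> f z \<noteq> 0" and n: "n > 0"
  obtains g where "g holomorphic_on S" "\<And>z. z \<in> S \<Longrightarrow> g z ^ n = f z"
proof -
  obtain L where L: "L holomorphic_on S" "\<And>z. z \<in> S \<Longrightarrow> f z = exp (L z)"
    using contractible_imp_holomorphic_log[OF hol S nz] by blast
  show thesis
  proof
    show "(\<lambda>z. exp (L z / of_nat n)) holomorphic_on S"
      by (intro holomorphic_intros L(1)) (use n in simp)
    show "exp (L z / of_nat n) ^ n = f z" if "z \<in> S" for z
      using n L(2)[OF that] by (simp add: exp_of_nat_mult[symmetric])
  qed
qed

lemma Im_eq_norm_square_imp_constant_on: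
  fixes t g :: "complex \<Rightarrow> complex"
  assumes holt: "t holomorphic_on S" and holg: "g holomorphic_on S"
    and S: "open S" "connected S" and z0: "z0 \<in> S"
    and Im_t: "\<And>z. z \<in> S \<Longrightarrow> Im (t z) = cmod (g z) ^ 2"
  shows "t constant_on S"
proof -
  define H where "H z = t z - 2 * \<i> * cnj (g z0) * g z" for z
  have Im_H: "Im (H z) = Im (H z0) + cmod (g z - g z0) ^ 2" if "z \<in> S" for z
    using Im_t[OF that] Im_t[OF z0]
    unfolding H_def cmod_power2 by (simp add: power2_eq_square algebra_simps)
  have "H holomorphic_on S"
    unfolding H_def by (intro holomorphic_intros holt holg)
  then have "H constant_on S"
  proof (rule Im_minimum_imp_constant_on[OF _ S z0])
    show "Im (H z0) \<le> Im (H z)" if "z \<in> S" for z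
      using Im_H[OF that] by simp
  qed
  then have "g z = g z0" if "z \<in> S" for z
    using Im_H[OF that] that z0 by (metis constant_on_def add_cancel_left_right norm_eq_zero
        right_minus_eq zero_eq_power2)
  then have "Im (t z0) \<le> Im (t z)" if "z \<in> S" for z
    using Im_t[OF that] Im_t[OF z0] that by simp
  then show ?thesis
    by (rule Im_minimum_imp_constant_on[OF holt S z0])
qed

lemma constant_on_imp_eventually_nhds:
  assumes "f constant_on T" "open T" "z0 \<in> T"
  shows "\<forall>\<^sub>F z in nhds z0. f z = f z0"
  using assms unfolding eventually_nhds constant_on_def by metis

lemma Im_cube_eq_norm_square_imp_eventually_const:
  fixes u t :: "complex \<Rightarrow> complex"
  assumes holu: "u holomorphic_on S" and holt: "t holomorphic_on S" and S: "open S" and z0: "z0 \<in> S"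
    and rel: "\<And>z. z \<in> S \<Longrightarrow> cmod (u z * t z) ^ 2 = Im (t z) ^ 3"
  shows "\<forall>\<^sub>F z in nhds z0. t z = t z0"
proof -
  have Im_nonneg: "0 \<le> Im (t z)" if "z \<in> S" for z
    using rel[OF that] zero_le_power2[of "cmod (u z * t z)"] by (simp add: zero_le_odd_power)
  obtain R where R: "R > 0" "ball z0 R \<subseteq> S"
    using S z0 openE by blast
  consider "Im (t z0) = 0" | "Im (t z0) > 0"
    using Im_nonneg[OF z0] by linarith
  then show ?thesis
  proof cases
    case 1
    then have "t constant_on ball z0 R"
      using R Im_nonneg
      by (intro Im_minimum_imp_constant_on[of t _ z0] holomorphic_on_subset[OF holt R(2)]) auto
    then show ?thesis
      using R(1) by (intro constant_on_imp_eventually_nhds) auto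
  next
    case 2
    define h where "h z = u z * t z" for z
    have holh: "h holomorphic_on S"
      unfolding h_def by (intro holomorphic_intros holu holt)
    have "h z0 \<noteq> 0"
      using rel[OF z0] 2 unfolding h_def by auto
    moreover have "isCont h z0"
      using holh S z0 by (meson field_differentiable_imp_continuous_at holomorphic_on_imp_differentiable_at)
    ultimately obtain e where e: "e > 0" "\<And>z. dist z0 z < e \<Longrightarrow> h z \<noteq> 0"
      using continuous_at_avoid by metis
    define B where "B = ball z0 (min e R)"
    have B: "B \<subseteq> S" "z0 \<in> B" "open B" "connected B"
      using R e(1) by (auto simp: B_def)
    obtain g where g: "g holomorphic_on B" "\<And>z. z \<in> B \<Longrightarrow> g z ^ 3 = h z"
      using contractible_imp_holomorphic_root[of h B 3] holomorphic_on_subset[OF holh B(1)] e(2)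
      by (auto simp: B_def convex_imp_contractible)
    have "Im (t z) = cmod (g z) ^ 2" if "z \<in> B" for z
    proof (rule power_eq_imp_eq_base[of _ 3])
      have "(cmod (g z) ^ 2) ^ 3 = cmod (g z ^ 3) ^ 2"
        by (simp add: norm_power flip: power_mult)
      then show "Im (t z) ^ 3 = (cmod (g z) ^ 2) ^ 3"
        using rel[of z] g(2)[OF that] that B(1) by (auto simp: h_def)
    qed (use that B(1) Im_nonneg in auto)
    then have "t constant_on B"
      using Im_eq_norm_square_imp_constant_on[OF holomorphic_on_subset[OF holt B(1)] g(1) B(3,4,2)]
      by blast
    then show ?thesis
      using B by (intro constant_on_imp_eventually_nhds) auto
  qed
qed

definition K_relation :: "complex \<Rightarrow> complex \<Rightarrow> complex \<Rightarrow> bool" where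
  "K_relation a b c \<longleftrightarrow>
     cmod (a * b * c) ^ 2 = Im (b * cnj c) ^ 3 \<and> cmod a ^ 2 \<le> cmod b * cmod c"

lemma K_relation_imp_eventually_const:
  fixes u t :: "complex \<Rightarrow> complex"
  assumes holu: "u holomorphic_on S" and holt: "t holomorphic_on S" and S: "open S" and z0: "z0 \<in> S"
    and rel: "\<And>z. z \<in> S \<Longrightarrow> K_relation (u z) (t z) 1"
  shows "\<forall>\<^sub>F z in nhds z0. u z = u z0 \<and> t z = t z0"
proof -
  have rel_eq: "cmod (u z * t z) ^ 2 = Im (t z) ^ 3" and rel_le: "cmod (u z) ^ 2 \<le> cmod (t z)"
    if "z \<in> S" for z
    using rel[OF that] by (auto simp: K_relation_def)
  have t_near: "\<forall>\<^sub>F z in nhds z0. t z = t z0"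
    by (rule Im_cube_eq_norm_square_imp_eventually_const[OF holu holt S z0 rel_eq])
  then have "\<forall>\<^sub>F z in nhds z0. t z = t z0 \<and> z \<in> S"
    using eventually_nhds_in_open[OF S z0] by (rule eventually_conj)
  then obtain R where R: "R > 0" and near: "\<And>z. dist z z0 < R \<Longrightarrow> t z = t z0 \<and> z \<in> S"
    unfolding eventually_nhds_metric by blast
  have t_const: "\<And>z. z \<in> ball z0 R \<Longrightarrow> t z = t z0" and ball_S: "ball z0 R \<subseteq> S"
    using near by (metis mem_ball dist_commute subsetI)+
  have z0_ball: "z0 \<in> ball z0 R"
    using R by simp
  have "u constant_on ball z0 R"
  proof (cases "t z0 = 0")
    case True
    then have "u z = 0" if "z \<in> ball z0 R" for z
      using rel_le[of z] t_const[OF that] that ball_S True by auto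
    then show ?thesis
      unfolding constant_on_def by blast
  next
    case False
    have mod_const: "cmod (u z) = cmod (u z0)" if "z \<in> ball z0 R" for z
    proof -
      have "cmod (u z) ^ 2 * cmod (t z0) ^ 2 = cmod (u z0) ^ 2 * cmod (t z0) ^ 2"
        using rel_eq[of z] rel_eq[OF z0] t_const[OF that] that ball_S
        by (auto simp: norm_mult power_mult_distrib)
      then show ?thesis
        using False by simp
    qed
    show ?thesis
      using maximum_modulus_principle[OF holomorphic_on_subset[OF holu ball_S] open_ball connected_ball
          open_ball order_refl z0_ball] mod_const
      by (metis order_refl)
  qed
  then have "\<forall>\<^sub>F z in nhds z0. u z = u z0"
    using z0_ball by (intro constant_on_imp_eventually_nhds) auto
  then show ?thesis
    using t_near by (rule eventually_conj)
qed

lemma K_relation_scale: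
  assumes "K_relation a b c"
  shows "K_relation (k * a) (k * b) (k * c)"
proof -
  have "k * b * cnj (k * c) = (k * cnj k) * (b * cnj c)"
    by (simp add: algebra_simps)
  then have kbc: "k * b * cnj (k * c) = of_real (cmod k ^ 2) * (b * cnj c)"
    by (simp only: complex_norm_square)
  have "Im (k * b * cnj (k * c)) = cmod k ^ 2 * Im (b * cnj c)"
    unfolding kbc by simp
  then have "Im (k * b * cnj (k * c)) ^ 3 = cmod k ^ 6 * Im (b * cnj c) ^ 3"
    by (simp add: power_mult_distrib flip: power_mult)
  moreover have "cmod (k * a * (k * b) * (k * c)) ^ 2 = cmod k ^ 6 * cmod (a * b * c) ^ 2"
    by (simp add: norm_mult power_mult_distrib flip: power_mult)
  moreover have "cmod (k * a) ^ 2 = cmod k ^ 2 * cmod a ^ 2"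
    and "cmod (k * b) * cmod (k * c) = cmod k ^ 2 * (cmod b * cmod c)"
    by (simp_all add: norm_mult power2_eq_square)
  ultimately show ?thesis
    using assms by (simp add: K_relation_def mult_left_mono)
qed

lemma K_relation_swap:
  assumes "K_relation a b c"
  shows "K_relation a (- c) b"
proof -
  have "Im (- c * cnj b) = Im (b * cnj c)"
    by simp
  moreover have "cmod (a * - c * b) = cmod (a * b * c)"
    by (simp add: norm_mult)
  ultimately show ?thesis
    using assms by (simp add: K_relation_def mult.commute)
qed

lemma K_relation_dehomogenize:
  assumes "c \<noteq> 0" "K_relation a b c"
  shows "K_relation (a / c) (b / c) 1"
proof -
  have c: "cmod c > 0"
    using assms(1) by simp
  have "Im (b / c) = Im (b * cnj c) / cmod c ^ 2"
    by (simp add: Im_divide cmod_power2 algebra_simps)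
  then have "Im (b / c) ^ 3 = cmod (a * b * c) ^ 2 / cmod c ^ 6"
    using assms(2) by (simp add: K_relation_def power_divide flip: power_mult)
  also have "\<dots> = cmod (a / c * (b / c)) ^ 2"
    using c by (simp add: norm_mult norm_divide power_mult_distrib power_divide field_simps
        flip: power_add)
  finally have eq: "cmod (a / c * (b / c)) ^ 2 = Im (b / c) ^ 3" ..
  have "cmod (a / c) ^ 2 = cmod a ^ 2 / cmod c ^ 2"
    by (simp add: norm_divide power_divide)
  also have "\<dots> \<le> cmod b * cmod c / cmod c ^ 2"
    using assms(2) by (intro divide_right_mono) (simp_all add: K_relation_def)
  also have "\<dots> = cmod (b / c)"
    using c by (simp add: norm_divide power2_eq_square)
  finally show ?thesis
    using eq by (simp add: K_relation_def)
qed

lemma K_relation_Fhom: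
  assumes "w \<in> S3"
  shows "K_relation (Fhom w $ 1) (Fhom w $ 2) (Fhom w $ 3)"
proof -
  obtain w1 w2 where w: "w = (w1, w2)"
    by (cases w)
  have Im_i_times_of_real: "Im (\<i> * of_real r * z) = r * Re z" for r z
    by simp
  define a where "a = 1 + w2"
  define b where "b = 1 - w2"
  have Fhom: "Fhom w $ 1 = w1 ^ 3" "Fhom w $ 2 = - (a ^ 2 * b)" "Fhom w $ 3 = \<i> * a * b ^ 2"
    by (simp_all add: Fhom_def w a_def b_def)
  have "Re (a * cnj b) = 1 - cmod w2 ^ 2"
    unfolding a_def b_def cmod_power2 by (simp add: power2_eq_square algebra_simps)
  then have Re_ab: "Re (a * cnj b) = cmod w1 ^ 2"
    using assms by (simp add: S3_def w)
  have "- (a ^ 2 * b) * cnj (\<i> * a * b ^ 2) = \<i> * ((a * cnj a) * (b * cnj b)) * (a * cnj b)"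
    by (simp add: power2_eq_square algebra_simps)
  also have "\<dots> = \<i> * of_real (cmod a ^ 2 * cmod b ^ 2) * (a * cnj b)"
    by (simp only: of_real_mult complex_norm_square)
  finally have prod: "- (a ^ 2 * b) * cnj (\<i> * a * b ^ 2)
      = \<i> * of_real (cmod a ^ 2 * cmod b ^ 2) * (a * cnj b)" .
  have "Im (- (a ^ 2 * b) * cnj (\<i> * a * b ^ 2)) = cmod a ^ 2 * cmod b ^ 2 * cmod w1 ^ 2"
    using Re_ab unfolding prod by (simp only: Im_i_times_of_real)
  moreover have "cmod (w1 ^ 3 * - (a ^ 2 * b) * (\<i> * a * b ^ 2)) ^ 2
      = (cmod a ^ 2 * cmod b ^ 2 * cmod w1 ^ 2) ^ 3"
    by (simp add: norm_mult norm_power) algebra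
  moreover have "cmod (w1 ^ 3) ^ 2 \<le> cmod (- (a ^ 2 * b)) * cmod (\<i> * a * b ^ 2)"
  proof -
    have "cmod w1 ^ 2 \<le> cmod a * cmod b"
      using complex_Re_le_cmod[of "a * cnj b"] Re_ab by (simp add: norm_mult)
    then have "(cmod w1 ^ 2) ^ 3 \<le> (cmod a * cmod b) ^ 3"
      by (rule power_mono) simp
    moreover have "cmod (- (a ^ 2 * b)) * cmod (\<i> * a * b ^ 2) = (cmod a * cmod b) ^ 3"
      by (simp add: norm_mult norm_power) algebra
    ultimately show ?thesis
      by (simp add: norm_power flip: power_mult)
  qed
  ultimately show ?thesis
    by (simp add: K_relation_def Fhom)
qed

lemma closed_K_relation: "closed {v :: complex^3. K_relation (v $ 1) (v $ 2) (v $ 3)}"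
  unfolding K_relation_def Collect_conj_eq
  by (intro closed_Int closed_Collect_eq closed_Collect_le continuous_intros)

lemma K_cone_imp_K_relation:
  assumes "v \<in> K_cone"
  shows "K_relation (v $ 1) (v $ 2) (v $ 3)"
proof -
  have "image_cone \<subseteq> {v. K_relation (v $ 1) (v $ 2) (v $ 3)}"
    unfolding image_cone_def using K_relation_scale[OF K_relation_Fhom] by auto
  then have "closure image_cone \<subseteq> {v. K_relation (v $ 1) (v $ 2) (v $ 3)}"
    using closed_K_relation by (rule closure_minimal)
  then show ?thesis
    using assms unfolding K_cone_def by auto
qed

lemma K_relation_imp_eventually_proportional:
  fixes A B C :: "complex \<Rightarrow> complex"
  assumes holA: "A holomorphic_on S" and holB: "B holomorphic_on S" and holC: "C holomorphic_on S"
    and S: "open S" and z0: "z0 \<in> S" and Cz0: "C z0 \<noteq> 0"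
    and rel: "\<And>z. z \<in> S \<Longrightarrow> K_relation (A z) (B z) (C z)"
  shows "\<forall>\<^sub>F z in nhds z0. A z = C z / C z0 * A z0 \<and> B z = C z / C z0 * B z0"
proof -
  define S' where "S' = S \<inter> C -` (- {0})"
  have S': "open S'" "z0 \<in> S'" "S' \<subseteq> S"
    using continuous_open_preimage[OF holomorphic_on_imp_continuous_on[OF holC] S, of "- {0}"] z0 Cz0
    by (auto simp: S'_def)
  have C_nz: "C z \<noteq> 0" if "z \<in> S'" for z
    using that by (simp add: S'_def)
  have "\<forall>\<^sub>F z in nhds z0. A z / C z = A z0 / C z0 \<and> B z / C z = B z0 / C z0"
  proof (rule K_relation_imp_eventually_const[OF _ _ S'(1,2)])
    show "(\<lambda>z. A z / C z) holomorphic_on S'" "(\<lambda>z. B z / C z) holomorphic_on S'"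
      using S'(3) C_nz by (auto intro!: holomorphic_intros holomorphic_on_subset[OF holA]
          holomorphic_on_subset[OF holB] holomorphic_on_subset[OF holC])
    show "K_relation (A z / C z) (B z / C z) 1" if "z \<in> S'" for z
      using that S'(3) C_nz rel by (intro K_relation_dehomogenize) auto
  qed
  moreover have "\<forall>\<^sub>F z in nhds z0. C z \<noteq> 0"
    using eventually_nhds_in_open[OF S'(1,2)] by (rule eventually_mono) (rule C_nz)
  ultimately show ?thesis
    by eventually_elim (use Cz0 in \<open>auto simp: field_simps\<close>)
qed

lemma proj_eq_sym: "proj_eq u v \<Longrightarrow> proj_eq v u"
  unfolding proj_eq_def by (metis left_inverse inverse_nonzero_iff_nonzero scaleR_one vector_smult_assoc
      vector_smult_lid)

lemma proj_eq_trans: "proj_eq u v \<Longrightarrow> proj_eq v w \<Longrightarrow> proj_eq u w"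
  unfolding proj_eq_def by (metis mult_eq_0_iff vector_smult_assoc)

lemma holomorphic_K_curve_eventually_proj_eq:
  fixes \<gamma> :: "complex \<Rightarrow> complex^3"
  assumes hol: "\<And>i. (\<lambda>z. \<gamma> z $ i) holomorphic_on S" and S: "open S" and z0: "z0 \<in> S"
    and nz: "\<And>z. z \<in> S \<Longrightarrow> \<gamma> z \<noteq> 0"
    and rel: "\<And>z. z \<in> S \<Longrightarrow> K_relation (\<gamma> z $ 1) (\<gamma> z $ 2) (\<gamma> z $ 3)"
  shows "\<forall>\<^sub>F z in nhds z0. proj_eq (\<gamma> z0) (\<gamma> z)"
proof -
  have "\<exists>k. \<forall>\<^sub>F z in nhds z0. \<gamma> z = k z *s \<gamma> z0"
  proof (cases "\<gamma> z0 $ 3 = 0")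
    case False
    have "\<forall>\<^sub>F z in nhds z0. \<gamma> z = (\<gamma> z $ 3 / \<gamma> z0 $ 3) *s \<gamma> z0"
      using K_relation_imp_eventually_proportional[OF hol hol hol S z0 False rel]
      by (rule eventually_mono) (use False in \<open>auto simp: vec_eq_iff forall_3\<close>)
    then show ?thesis
      by (rule exI[of _ "\<lambda>z. \<gamma> z $ 3 / \<gamma> z0 $ 3"])
  next
    case True
    have "\<gamma> z0 $ 2 \<noteq> 0"
      using rel[OF z0] nz[OF z0] True by (auto simp: K_relation_def vec_eq_iff forall_3)
    moreover have "(\<lambda>z. - \<gamma> z $ 3) holomorphic_on S"
      by (intro holomorphic_intros hol)
    ultimately have "\<forall>\<^sub>F z in nhds z0. \<gamma> z $ 1 = \<gamma> z $ 2 / \<gamma> z0 $ 2 * \<gamma> z0 $ 1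
        \<and> - \<gamma> z $ 3 = \<gamma> z $ 2 / \<gamma> z0 $ 2 * - \<gamma> z0 $ 3"
      using K_relation_imp_eventually_proportional[OF hol _ hol S z0] rel K_relation_swap by blast
    then have "\<forall>\<^sub>F z in nhds z0. \<gamma> z = (\<gamma> z $ 2 / \<gamma> z0 $ 2) *s \<gamma> z0"
      by (rule eventually_mono) (use \<open>\<gamma> z0 $ 2 \<noteq> 0\<close> in \<open>auto simp: vec_eq_iff forall_3\<close>)
    then show ?thesis
      by (rule exI[of _ "\<lambda>z. \<gamma> z $ 2 / \<gamma> z0 $ 2"])
  qed
  then obtain k where "\<forall>\<^sub>F z in nhds z0. \<gamma> z = k z *s \<gamma> z0"
    by blast
  then show ?thesis
    using eventually_nhds_in_open[OF S z0]
    by eventually_elim (metis nz proj_eq_def vector_smult_lzero)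
qed

theorem mainTheorem2:
  shows "\<not> (\<exists>\<gamma>. nonconst_holo_disc_P2 \<gamma> \<and> (\<forall>z\<in>ball 0 1. \<gamma> z \<in> K_cone))"
proof
  assume "\<exists>\<gamma>. nonconst_holo_disc_P2 \<gamma> \<and> (\<forall>z\<in>ball 0 1. \<gamma> z \<in> K_cone)"
  then obtain \<gamma> z1 z2 where hol: "\<And>i. (\<lambda>z. \<gamma> z $ i) holomorphic_on ball 0 1"
    and nz: "\<And>z. z \<in> ball 0 1 \<Longrightarrow> \<gamma> z \<noteq> 0" and K: "\<And>z. z \<in> ball 0 1 \<Longrightarrow> \<gamma> z \<in> K_cone"
    and z12: "z1 \<in> ball 0 1" "z2 \<in> ball 0 1" "\<not> proj_eq (\<gamma> z1) (\<gamma> z2)"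
    unfolding nonconst_holo_disc_P2_def by blast
  have "proj_eq (\<gamma> z1) (\<gamma> z2)"
  proof (rule connected_equivalence_relation[OF connected_ball z12(1,2)])
    fix a :: complex
    assume a: "a \<in> ball 0 1"
    have "\<forall>\<^sub>F z in nhds a. proj_eq (\<gamma> a) (\<gamma> z)"
      using holomorphic_K_curve_eventually_proj_eq[OF hol open_ball a nz] K K_cone_imp_K_relation
      by blast
    then obtain T where "open T" "a \<in> T" "\<forall>z\<in>T. proj_eq (\<gamma> a) (\<gamma> z)"
      unfolding eventually_nhds by blast
    then show "\<exists>T. openin (top_of_set (ball 0 1)) T \<and> a \<in> T \<and> (\<forall>z\<in>T. proj_eq (\<gamma> a) (\<gamma> z))"
      using a by (intro exI[of _ "ball 0 1 \<inter> T"]) (auto intro: openin_open_Int)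
  qed (blast intro: proj_eq_sym proj_eq_trans)+
  with z12(3) show False
    by contradiction
qed

end
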